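(* Let $\Gamma$ be a countably infinite group acting minimally and continuously on a compact metrizable space $X$ with more than one orbit, let $x_1\in X$ have trivial stabilizer, and let $f:X\setminus\{x_1\}\to\{1,-1\}$ be continuous and not continuously extendable to $X$. Let $\pi_f:X_f\to X$ be the McMahon extension with continuous $\tilde f:X_f\to\{1,-1\}$, and put $X_{f,\pm}=\tilde f^{-1}(\pm1)$ and $X_\pm=f^{-1}(\pm1)$. Then $(X_{f,+},X_{f,-})$ has arbitrarily large finite independence sets if and only if $(X_+,X_-)$ has arbitrarily large finite independence sets.
   Context: McMahon extension: $\Gamma\curvearrowright X_f$ is a minimal continuous action on a compact metrizable space with a $\Gamma$-equivariant continuous surjection $\pi_f:X_f\to X$ such that $\pi_f^{-1}(x)$ is a single point for $x\notin\Gamma x_1$ and two points for $x\in\Gamma x_1$, and $\tilde f$ is the continuous extension to $X_f$ of $f\circ\pi_f$ on $X_f\setminus\pi_f^{-1}(x_1)$ (unique up to conjugacy). A set $M\subseteq\Gamma$ is an independence set for $(A_1,A_2)$ if $\bigcap_{s\in F}s^{-1}A_{\omega(s)}\ne\emptyset$ for every nonempty finite $F\subseteq M$ and every $\omega\in\{1,2\}^F$. *)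

theory Defs
  imports "HOL-Analysis.Analysis"
begin

text \<open>A continuous action of a group (written additively, class group_add,
  not assumed commutative) on a topological space.\<close>
definition cont_action :: "('g::group_add \<Rightarrow> 'x::topological_space \<Rightarrow> 'x) \<Rightarrow> bool" where
  "cont_action act \<longleftrightarrow>
     (\<forall>x. act 0 x = x) \<and>
     (\<forall>g h x. act (g + h) x = act g (act h x)) \<and>
     (\<forall>g. continuous_on UNIV (act g))"

definition orbit :: "('g \<Rightarrow> 'x \<Rightarrow> 'x) \<Rightarrow> 'x \<Rightarrow> 'x set" where
  "orbit act x = range (\<lambda>g. act g x)"

definition minimal_action :: "('g::group_add \<Rightarrow> 'x::topological_space \<Rightarrow> 'x) \<Rightarrow> bool" where
  "minimal_action act \<longleftrightarrow> cont_action act \<and> (\<forall>x. closure (orbit act x) = UNIV)"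

definition independence_set ::
  "('g \<Rightarrow> 'x \<Rightarrow> 'x) \<Rightarrow> 'x set \<Rightarrow> 'x set \<Rightarrow> 'g set \<Rightarrow> bool" where
  "independence_set act A1 A2 M \<longleftrightarrow>
     (\<forall>F \<omega>. F \<subseteq> M \<and> finite F \<and> F \<noteq> {} \<and> (\<forall>s\<in>F. \<omega> s \<in> {1::nat, 2}) \<longrightarrow>
        (\<Inter>s\<in>F. {x. act s x \<in> (if \<omega> s = 1 then A1 else A2)}) \<noteq> {})"

definition arb_large_finite_indep ::
  "('g \<Rightarrow> 'x \<Rightarrow> 'x) \<Rightarrow> 'x set \<Rightarrow> 'x set \<Rightarrow> bool" where
  "arb_large_finite_indep act A1 A2 \<longleftrightarrow>
     (\<forall>n::nat. \<exists>M. finite M \<and> card M \<ge> n \<and> independence_set act A1 A2 M)"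

end

theory Submission
  imports Defs
begin

text \<open>Both systems have the same finite independence sets.\<close>

lemma cont_action_inverse:
  assumes "cont_action act"
  shows "act (- g) (act g x) = x"
  using assms unfolding cont_action_def by (metis add.left_inverse)

lemma orbit_subset:
  assumes "cont_action act" "y \<in> orbit act x"
  shows "orbit act y \<subseteq> orbit act x"
proof -
  obtain g where "y = act g x"
    using assms(2) unfolding orbit_def by auto
  then have "act h y = act (h + g) x" for h
    using assms(1) unfolding cont_action_def by simp
  then show ?thesis
    unfolding orbit_def by auto
qed

lemma orbit_eq:
  assumes "cont_action act" "y \<in> orbit act x"
  shows "orbit act y = orbit act x"
proof -
  obtain g where "y = act g x"
    using assms(2) unfolding orbit_def by auto
  then have "x \<in> orbit act y"
    using cont_action_inverse[OF assms(1)] unfolding orbit_def by (metis rangeI)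
  then show ?thesis
    using orbit_subset assms by blast
qed

lemma minimal_action_isolated_orbit:
  assumes "minimal_action act" "open {y}"
  shows "orbit act y = UNIV"
proof -
  have "x \<in> orbit act y" for x
  proof -
    have "y \<in> closure (orbit act x)"
      using assms(1) unfolding minimal_action_def by simp
    then have "y \<in> orbit act x"
      using open_Int_closure_eq_empty[OF assms(2), of "orbit act x"] by blast
    moreover have "x \<in> orbit act x"
      using assms(1) unfolding minimal_action_def cont_action_def orbit_def by (metis rangeI)
    ultimately show ?thesis
      using orbit_eq assms(1) unfolding minimal_action_def by blast
  qed
  then show ?thesis by blast
qed

lemma orbit_equivariant_image:
  assumes "\<And>g y. p (actf g y) = act g (p y)"
  shows "orbit act (p y) = p ` orbit actf y"
  unfolding orbit_def using assms by (auto simp: image_image)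

lemma minimal_extension_no_isolated_points:
  fixes p :: "'y::topological_space \<Rightarrow> 'x::topological_space" and y :: 'y
  assumes "minimal_action actf" "cont_action act" "surj p"
    and "\<And>g y. p (actf g y) = act g (p y)"
    and "x' \<notin> orbit act x"
  shows "\<not> open {y}"
proof
  assume "open {y}"
  then have "orbit act (p y) = UNIV"
    using minimal_action_isolated_orbit[OF assms(1)] orbit_equivariant_image[of p actf act y]
      assms(3,4) by metis
  then have "orbit act x = UNIV"
    using orbit_eq[OF assms(2)] by (metis UNIV_I)
  then show False
    using assms(5) by blast
qed

lemma infinite_open_no_isolated_points:
  fixes U :: "'a::t1_space set"
  assumes "\<And>y::'a. \<not> open {y}" "open U" "U \<noteq> {}"
  shows "infinite U"
proof
  assume "finite U"
  obtain y where "y \<in> U"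
    using assms(3) by blast
  have "open (U - (U - {y}))"
    using assms(2) \<open>finite U\<close> by (simp add: open_Diff finite_imp_closed)
  moreover have "U - (U - {y}) = {y}"
    using \<open>y \<in> U\<close> by blast
  ultimately show False
    using assms(1)[of y] by simp
qed

lemma finite_vimage_finite_fibres:
  assumes "\<And>x. finite (p -` {x})" "finite S"
  shows "finite (p -` S)"
proof -
  have "p -` S = (\<Union>x\<in>S. p -` {x})"
    by blast
  then show ?thesis
    using assms by simp
qed

lemma open_vimage_singleton_finite_range:
  fixes h :: "'a::topological_space \<Rightarrow> 'b::t1_space"
  assumes "continuous_on UNIV h" "finite (range h)"
  shows "open (h -` {c})"
proof -
  have "h -` {c} = - h -` (range h - {c})"
    by blast
  moreover have "closed (h -` (range h - {c}))"
    using assms by (simp add: closed_vimage finite_imp_closed)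
  ultimately show ?thesis
    by (simp add: open_Compl)
qed

definition indep_cell ::
  "('g \<Rightarrow> 'x \<Rightarrow> 'x) \<Rightarrow> 'x set \<Rightarrow> 'x set \<Rightarrow> 'g set \<Rightarrow> ('g \<Rightarrow> nat) \<Rightarrow> 'x set" where
  "indep_cell act A1 A2 F \<omega> = (\<Inter>s\<in>F. {x. act s x \<in> (if \<omega> s = 1 then A1 else A2)})"

lemma independence_set_transfer:
  assumes "\<And>F \<omega>. finite F \<Longrightarrow> F \<noteq> {} \<Longrightarrow> indep_cell act A1 A2 F \<omega> \<noteq> {} \<Longrightarrow>
      indep_cell act' B1 B2 F \<omega> \<noteq> {}"
    and "independence_set act A1 A2 M"
  shows "independence_set act' B1 B2 M"
  unfolding independence_set_def indep_cell_def[symmetric]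
proof (intro allI impI)
  fix F \<omega>
  assume F: "F \<subseteq> M \<and> finite F \<and> F \<noteq> {} \<and> (\<forall>s\<in>F. \<omega> s \<in> {1::nat, 2})"
  then have "indep_cell act A1 A2 F \<omega> \<noteq> {}"
    using assms(2) unfolding independence_set_def indep_cell_def[symmetric] by blast
  with F show "indep_cell act' B1 B2 F \<omega> \<noteq> {}"
    using assms(1) by blast
qed

lemma arb_large_finite_indep_transfer:
  assumes "\<And>F \<omega>. finite F \<Longrightarrow> F \<noteq> {} \<Longrightarrow> indep_cell act A1 A2 F \<omega> \<noteq> {} \<Longrightarrow>
      indep_cell act' B1 B2 F \<omega> \<noteq> {}"
    and "arb_large_finite_indep act A1 A2"
  shows "arb_large_finite_indep act' B1 B2"
  using assms(2) independence_set_transfer[of act A1 A2 act' B1 B2, OF assms(1)]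
  unfolding arb_large_finite_indep_def by meson

lemma open_indep_cell:
  assumes "\<And>s. continuous_on UNIV (act s)" "open A1" "open A2" "finite F"
  shows "open (indep_cell act A1 A2 F \<omega>)"
proof -
  have "open {x. act s x \<in> A}" if "open A" for s A
    using open_vimage[OF that assms(1)] unfolding vimage_def .
  then show ?thesis
    unfolding indep_cell_def using assms(2-4) by auto
qed

lemma indep_cell_vimage_subset:
  assumes "\<And>g y. p (actf g y) = act g (p y)"
    and "\<And>y. p y \<in> A1 \<Longrightarrow> y \<in> B1" "\<And>y. p y \<in> A2 \<Longrightarrow> y \<in> B2"
  shows "p -` indep_cell act A1 A2 F \<omega> \<subseteq> indep_cell actf B1 B2 F \<omega>"
proof
  fix y
  assume y: "y \<in> p -` indep_cell act A1 A2 F \<omega>"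
  show "y \<in> indep_cell actf B1 B2 F \<omega>"
    unfolding indep_cell_def
  proof safe
    fix s assume "s \<in> F"
    then have "p (actf s y) \<in> (if \<omega> s = 1 then A1 else A2)"
      using y assms(1) unfolding indep_cell_def by auto
    then show "actf s y \<in> (if \<omega> s = 1 then B1 else B2)"
      using assms(2,3)[of "actf s y"] by (simp split: if_splits)
  qed
qed

lemma image_in_indep_cell:
  assumes "\<And>g y. p (actf g y) = act g (p y)"
    and "\<And>y. p y \<noteq> a \<Longrightarrow> y \<in> B1 \<Longrightarrow> p y \<in> A1"
    and "\<And>y. p y \<noteq> a \<Longrightarrow> y \<in> B2 \<Longrightarrow> p y \<in> A2"
    and "y \<in> indep_cell actf B1 B2 F \<omega>" "\<forall>s\<in>F. act s (p y) \<noteq> a"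
  shows "p y \<in> indep_cell act A1 A2 F \<omega>"
  unfolding indep_cell_def
proof safe
  fix s assume "s \<in> F"
  then have "actf s y \<in> (if \<omega> s = 1 then B1 else B2)" "p (actf s y) \<noteq> a"
    using assms(1,4,5) unfolding indep_cell_def by auto
  then show "act s (p y) \<in> (if \<omega> s = 1 then A1 else A2)"
    using assms(1) assms(2,3)[of "actf s y"] by (cases "\<omega> s = 1") simp_all
qed

text \<open>\<open>U\<close> is infinite, while only finitely many of its points are mapped into
  \<open>{(-s) a | s \<in> F}\<close>.\<close>

lemma exists_in_open_avoiding_translates:
  fixes p :: "'y::t1_space \<Rightarrow> 'x::topological_space"
  assumes "cont_action act" "\<And>y::'y. \<not> open {y}" "\<And>x. finite (p -` {x})"
    and "open U" "U \<noteq> {}" "finite F"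
  shows "\<exists>y\<in>U. \<forall>s\<in>F. act s (p y) \<noteq> a"
proof -
  let ?T = "(\<lambda>s. act (- s) a) ` F"
  have "finite (p -` ?T)"
    using assms(6) by (intro finite_vimage_finite_fibres[OF assms(3)]) simp
  moreover have "infinite U"
    by (rule infinite_open_no_isolated_points[OF assms(2,4,5)])
  ultimately have "\<not> U \<subseteq> p -` ?T"
    using finite_subset by blast
  then obtain y where y: "y \<in> U" "p y \<notin> ?T"
    by blast
  have "act s (p y) \<noteq> a" if "s \<in> F" for s
  proof
    assume "act s (p y) = a"
    then have "p y = act (- s) a"
      using cont_action_inverse[OF assms(1), of s "p y"] by simp
    with that y(2) show False
      by blast
  qed
  with y(1) show ?thesis
    by blast
qed

lemma arb_large_finite_indep_lift:
  assumes "surj p" "\<And>g y. p (actf g y) = act g (p y)"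
    and "\<And>y. p y \<in> A1 \<Longrightarrow> y \<in> B1" "\<And>y. p y \<in> A2 \<Longrightarrow> y \<in> B2"
    and "arb_large_finite_indep act A1 A2"
  shows "arb_large_finite_indep actf B1 B2"
  using assms(5)
proof (rule arb_large_finite_indep_transfer[rotated])
  fix F \<omega>
  assume "indep_cell act A1 A2 F \<omega> \<noteq> {}"
  then have "p -` indep_cell act A1 A2 F \<omega> \<noteq> {}"
    by (simp add: surj_vimage_empty[OF assms(1)])
  moreover have "p -` indep_cell act A1 A2 F \<omega> \<subseteq> indep_cell actf B1 B2 F \<omega>"
    using assms(2-4) by (rule indep_cell_vimage_subset)
  ultimately show "indep_cell actf B1 B2 F \<omega> \<noteq> {}"
    by blast
qed

lemma arb_large_finite_indep_factor:
  fixes p :: "'y::t1_space \<Rightarrow> 'x::topological_space"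
  assumes "cont_action act" "cont_action actf" "\<And>y::'y. \<not> open {y}"
    and "\<And>x. finite (p -` {x})" "\<And>g y. p (actf g y) = act g (p y)"
    and "open B1" "open B2"
    and "\<And>y. p y \<noteq> a \<Longrightarrow> y \<in> B1 \<Longrightarrow> p y \<in> A1"
    and "\<And>y. p y \<noteq> a \<Longrightarrow> y \<in> B2 \<Longrightarrow> p y \<in> A2"
    and "arb_large_finite_indep actf B1 B2"
  shows "arb_large_finite_indep act A1 A2"
  using assms(10)
proof (rule arb_large_finite_indep_transfer[rotated])
  fix F \<omega>
  assume F: "finite F" and nonempty: "indep_cell actf B1 B2 F \<omega> \<noteq> {}"
  have "open (indep_cell actf B1 B2 F \<omega>)"
    using assms(2,6,7) F unfolding cont_action_def by (intro open_indep_cell) auto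
  then obtain y where y: "y \<in> indep_cell actf B1 B2 F \<omega>"
      and avoids: "\<forall>s\<in>F. act s (p y) \<noteq> a"
    using exists_in_open_avoiding_translates[OF assms(1,3,4) _ nonempty F] by blast
  have "p y \<in> indep_cell act A1 A2 F \<omega>"
    using assms(5,8,9) y avoids by (rule image_in_indep_cell)
  then show "indep_cell act A1 A2 F \<omega> \<noteq> {}"
    by blast
qed

theorem lemma3p3:
  fixes act :: "'g::group_add \<Rightarrow> 'x::metric_space \<Rightarrow> 'x"
    and actf :: "'g \<Rightarrow> 'y::metric_space \<Rightarrow> 'y"
    and x1 :: 'x
    and f :: "'x \<Rightarrow> real"
    and pif :: "'y \<Rightarrow> 'x"
    and ft :: "'y \<Rightarrow> real"
  assumes countable_G: "countable (UNIV :: 'g set)"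
    and infinite_G: "infinite (UNIV :: 'g set)"
    and compact_X: "compact (UNIV :: 'x set)"
    and minimal_X: "minimal_action act"
    and more_orbits: "\<exists>x y. y \<notin> orbit act x"
    and free_x1: "\<And>g. act g x1 = x1 \<Longrightarrow> g = 0"
    and f_cont: "continuous_on (- {x1}) f"
    and f_vals: "\<And>x. x \<noteq> x1 \<Longrightarrow> f x \<in> {1, -1}"
    and f_not_ext: "\<not> (\<exists>g. continuous_on UNIV g \<and> range g \<subseteq> {1, -1} \<and>
                          (\<forall>x. x \<noteq> x1 \<longrightarrow> g x = f x))"
    and compact_Xf: "compact (UNIV :: 'y set)"
    and minimal_Xf: "minimal_action actf"
    and pif_cont: "continuous_on UNIV pif"
    and pif_surj: "surj pif"
    and pif_equiv: "\<And>g y. pif (actf g y) = act g (pif y)"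
    and pif_fib1: "\<And>x. x \<notin> orbit act x1 \<Longrightarrow> card (pif -` {x}) = 1"
    and pif_fib2: "\<And>x. x \<in> orbit act x1 \<Longrightarrow> card (pif -` {x}) = 2"
    and ft_cont: "continuous_on UNIV ft"
    and ft_vals: "range ft \<subseteq> {1, -1}"
    and ft_ext: "\<And>y. pif y \<noteq> x1 \<Longrightarrow> ft y = f (pif y)"
  shows "arb_large_finite_indep actf (ft -` {1}) (ft -` {-1}) \<longleftrightarrow>
         arb_large_finite_indep act {x. x \<noteq> x1 \<and> f x = 1} {x. x \<noteq> x1 \<and> f x = -1}"
proof -
  have act: "cont_action act" and actf: "cont_action actf"
    using minimal_X minimal_Xf by (simp_all add: minimal_action_def)
  obtain x x' where "x' \<notin> orbit act x"
    using more_orbits by blast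
  note no_isolated =
    minimal_extension_no_isolated_points[where p = pif, OF minimal_Xf act pif_surj pif_equiv this]
  have fibres: "finite (pif -` {x})" for x
    using pif_fib1[of x] pif_fib2[of x]
    by (intro card_ge_0_finite) (cases "x \<in> orbit act x1", simp_all)
  have "finite (range ft)"
    using ft_vals by (rule finite_subset) simp
  then have open_levels: "open (ft -` {c})" for c
    by (rule open_vimage_singleton_finite_range[OF ft_cont])
  let ?A1 = "{x. x \<noteq> x1 \<and> f x = 1}" and ?A2 = "{x. x \<noteq> x1 \<and> f x = -1}"
  have factor1: "pif y \<in> ?A1" if "pif y \<noteq> x1" "y \<in> ft -` {1}" for y
    using that ft_ext[of y] by simp
  have factor2: "pif y \<in> ?A2" if "pif y \<noteq> x1" "y \<in> ft -` {-1}" for y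
    using that ft_ext[of y] by simp
  have lift1: "y \<in> ft -` {1}" if "pif y \<in> ?A1" for y
    using that ft_ext[of y] by simp
  have lift2: "y \<in> ft -` {-1}" if "pif y \<in> ?A2" for y
    using that ft_ext[of y] by simp
  show ?thesis
  proof
    show "arb_large_finite_indep act ?A1 ?A2"
      if "arb_large_finite_indep actf (ft -` {1}) (ft -` {-1})"
      using arb_large_finite_indep_factor[where p = pif and act = act and actf = actf,
          OF act actf no_isolated fibres pif_equiv open_levels open_levels factor1 factor2 that] .
    show "arb_large_finite_indep actf (ft -` {1}) (ft -` {-1})"
      if "arb_large_finite_indep act ?A1 ?A2"
      using arb_large_finite_indep_lift[where p = pif and act = act and actf = actf,
          OF pif_surj pif_equiv lift1 lift2 that] .
  qed
qed

end
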